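(* Assume the setting described in the context and fix a compact interval $I\subset(0,\infty)$. Suppose Assumptions (A1) and (A2) hold. Then for every $x\in F$, \[\lim_{n\rightarrow\infty}\sup_{t\in I}\left|\beta(n)q^n_{\lfloor\gamma(n)t\rfloor}(g_n(x))-q_t(x)\right|=0.\]
   Context: Let $(E,d_E)$ be a metric space and $F\subseteq E$ such that $F\cap\overline{B}_E(x,r)$ is compact for all $x\in E$, $r>0$ ($\overline{B}_E$, $B_E$ closed and open balls in $E$). Let $d_F:=d_E|_{F\times F}$, $B_F(x,r)$ the open ball in $(F,d_F)$, $\rho\in F$, $\nu$ a Radon measure of full support on $(F,d_F)$ (extended to $E$ by $\nu(A):=\nu(A\cap F)$), and $(q_t(x))_{x\in F,t>0}$ jointly continuous in $(t,x)$ with $q_t\ge0$, $\int_Fq_t\,d\nu=1$ for each $t>0$. For a locally finite connected graph $G$ with at least two vertices and distinguished vertex $\rho(G)$: $d_G$ is the shortest-path metric, $B_G(x,r)$ the open $d_G$-ball; $\mu^G$ a symmetric weight with $\mu^G_{xy}>0$ iff $\{x,y\}\in E(G)$; $\mu^G_x:=\sum_y\mu^G_{xy}$; $\nu^G(A):=\sum_{x\in A}\mu^G_x$; $X^G$ the discrete time simple random walk with $P_G(x,y)=\mu^G_{xy}/\mu^G_x$ and law $\mathbf{P}^G_x$; $p^G_m(x,y):=\mathbf{P}^G_x(X^G_m=y)/\nu^G(\{y\})$, $q^G_m(x,y):=\frac12(p^G_m(x,y)+p^G_{m+1}(x,y))$, $q^G_m(x):=q^G_m(\rho(G),x)$. $(G^n)_{n\ge1}$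 are such graphs with $V(G^n)\subseteq E$, $\rho(G^n)=\rho$; write $\nu^n,X^n,q^n$ for $\nu^{G^n},X^{G^n},q^{G^n}$. $(\alpha(n)),(\beta(n)),(\gamma(n))$ are non-negative sequences diverging to $\infty$. For $x\in E$, $g_n(x)$ is a point of $V(G^n)$ minimising $d_E(x,\cdot)$ over $V(G^n)$. Assumption (A1): (a) there is $c_1>0$ with $d_{G^n}(x,y)\ge c_1\alpha(n)d_E(x,y)$ for all $x,y\in V(G^n)$, $n\ge1$; and a non-negative $\tilde\alpha(n)=o(\alpha(n))$ such that for each $r>0$ there exist $c_2<\infty$, $n_0$ with $d_{G^n}(x,y)\le c_2\alpha(n)d_E(x,y)+\tilde\alpha(n)$ for all $x,y\in V(G^n)\cap B_E(\rho,r)$, $n\ge n_0$. (b) For each $r>0$, $\lim_n\sup_{x\in B_F(\rho,r)}d_E(x,V(G^n))=0$. (c) For every $x\in F$, $r>0$, $\lim_n\beta(n)^{-1}\nu^n(B_E(x,r))=\nu(B_E(x,r))$. (d) For every compact interval $I\subset(0,\infty)$, $x\in F$, $r>0$, $\lim_n\mathbf{P}^{G^n}_\rho(X^n_{\lfloor\gamma(n)t\rfloor}\in B_E(x,r))=\int_{B_F(x,r)}q_t(y)\nu(dy)$ uniformly for $t\in I$. Assumption (A2): for every compact interval $I\subset(0,\infty)$ and $r>0$, \[\lim_{\delta\to0}\limsup_{n\to\infty}\sup_{\substack{x,y\in B_{G^n}(\rho,\alpha(n)r):\\ d_{G^n}(x,y)\le\alpha(n)\delta}}\sup_{t\in I}\beta(n)\left|q^n_{\lfloor\gamma(n)t\rfloor}(x)-q^n_{\lfloor\gamma(n)t\rfloor}(y)\right|=0.\]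 *)

theory Defs
  imports "HOL-Analysis.Analysis" "HOL-Probability.Probability" "HOL-Library.Landau_Symbols"
begin

text \<open>A weighted graph is given by its vertex set V and a symmetric weight w;
  {x,y} is an edge iff w x y > 0.\<close>

definition adj :: "('a \<Rightarrow> 'a \<Rightarrow> real) \<Rightarrow> ('a \<times> 'a) set" where
  "adj w = {(x, y). 0 < w x y}"

definition wgraph :: "'a set \<Rightarrow> ('a \<Rightarrow> 'a \<Rightarrow> real) \<Rightarrow> bool" where
  "wgraph V w \<longleftrightarrow>
     (\<forall>x y. w x y = w y x) \<and> (\<forall>x y. 0 \<le> w x y) \<and>
     (\<forall>x y. 0 < w x y \<longrightarrow> x \<in> V \<and> y \<in> V \<and> x \<noteq> y) \<and>
     (\<forall>x\<in>V. finite {y. 0 < w x y}) \<and>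
     (\<forall>x\<in>V. \<forall>y\<in>V. (x, y) \<in> (adj w)\<^sup>*) \<and>
     (\<exists>x\<in>V. \<exists>y\<in>V. x \<noteq> y)"

definition gdist :: "('a \<Rightarrow> 'a \<Rightarrow> real) \<Rightarrow> 'a \<Rightarrow> 'a \<Rightarrow> nat" where
  "gdist w x y = (LEAST n. (x, y) \<in> adj w ^^ n)"

definition gball :: "'a set \<Rightarrow> ('a \<Rightarrow> 'a \<Rightarrow> real) \<Rightarrow> 'a \<Rightarrow> real \<Rightarrow> 'a set" where
  "gball V w x r = {y \<in> V. real (gdist w x y) < r}"

definition deg :: "('a \<Rightarrow> 'a \<Rightarrow> real) \<Rightarrow> 'a \<Rightarrow> real" where
  "deg w x = (\<Sum>y\<in>{y. 0 < w x y}. w x y)"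

text \<open>nu^G(A) = sum over x in A of mu_x (vertices outside V have mu_x = 0).\<close>
definition gmeasure :: "('a \<Rightarrow> 'a \<Rightarrow> real) \<Rightarrow> 'a set \<Rightarrow> ennreal" where
  "gmeasure w A = (\<Sum>\<^sub>\<infinity>x\<in>A. ennreal (deg w x))"

text \<open>walk_prob w m x A = P_x(X_m \<in> A) for the random walk with
  transition probabilities P(x,y) = w x y / mu_x (first-step decomposition).\<close>
fun walk_prob :: "('a \<Rightarrow> 'a \<Rightarrow> real) \<Rightarrow> nat \<Rightarrow> 'a \<Rightarrow> 'a set \<Rightarrow> real" where
  "walk_prob w 0 x A = indicator A x"
| "walk_prob w (Suc m) x A =
     (\<Sum>z\<in>{z. 0 < w x z}. (w x z / deg w x) * walk_prob w m z A)"

definition pG :: "('a \<Rightarrow> 'a \<Rightarrow> real) \<Rightarrow> nat \<Rightarrow> 'a \<Rightarrow> 'a \<Rightarrow> real" where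
  "pG w m x y = walk_prob w m x {y} / deg w y"

definition qG :: "('a \<Rightarrow> 'a \<Rightarrow> real) \<Rightarrow> nat \<Rightarrow> 'a \<Rightarrow> 'a \<Rightarrow> real" where
  "qG w m x y = (pG w m x y + pG w (Suc m) x y) / 2"

end

theory Submission
  imports Defs
begin

text \<open>Let B be a small ball around x. The probability that the walk started at \<rho> lies in B,
  averaged over the times \<lfloor>\<gamma>(n) t\<rfloor> and \<lfloor>\<gamma>(n) t\<rfloor> + 1, is the sum of \<mu>_y q^n(y) over the
  vertices y of B. By (A1)(a) and (A2), \<beta>(n) q^n(y) is uniformly close to \<beta>(n) q^n(g_n(x)) on B,
  so this average is close to q^n(g_n(x)) \<nu>^n(B), and by (A1)(c) to \<beta>(n) q^n(g_n(x)) \<nu>(B). By (A1)(d)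
  and the continuity of q the same average is close to q_t(x) \<nu>(B); since \<nu>(B) > 0, dividing by
  \<nu>(B) gives the claim, uniformly in t.\<close>

section \<open>Random walks on weighted graphs\<close>

lemma wgraph_weight_nonneg: "wgraph V w \<Longrightarrow> 0 \<le> w x y"
  unfolding wgraph_def by blast

lemma wgraph_edge_in_vertices: "wgraph V w \<Longrightarrow> 0 < w x y \<Longrightarrow> x \<in> V \<and> y \<in> V"
  unfolding wgraph_def by blast

lemma wgraph_finite_neighbours:
  assumes "wgraph V w"
  shows "finite {y. 0 < w x y}"
proof (cases "x \<in> V")
  case True
  then show ?thesis using assms unfolding wgraph_def by blast
next
  case False
  then have "{y. 0 < w x y} = {}" using wgraph_edge_in_vertices[OF assms] by blast
  then show ?thesis by simp
qed

lemma deg_nonneg: "wgraph V w \<Longrightarrow> 0 \<le> deg w x"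
  unfolding deg_def by (intro sum_nonneg) (simp add: wgraph_weight_nonneg)

lemma deg_pos:
  assumes g: "wgraph V w" and x: "x \<in> V"
  shows "0 < deg w x"
proof -
  obtain y where y: "y \<in> V" "y \<noteq> x" using g unfolding wgraph_def by blast
  have "(x, y) \<in> (adj w)\<^sup>*" using g x y unfolding wgraph_def by blast
  then obtain z where "(x, z) \<in> adj w" using y(2) by (metis converse_rtranclE)
  then have "0 < w x z" by (simp add: adj_def)
  then show ?thesis
    unfolding deg_def using wgraph_finite_neighbours[OF g, of x] by (intro sum_pos2[of _ z]) auto
qed

lemma deg_eq_0_outside: "wgraph V w \<Longrightarrow> x \<notin> V \<Longrightarrow> deg w x = 0"
  unfolding deg_def using wgraph_edge_in_vertices by (metis (mono_tags, lifting) mem_Collect_eq sum.neutral)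

text \<open>Quantifying over all finite supersets T lets supports of the walk at different times be
  merged by taking unions.\<close>

definition walk_supported_on :: "('a \<Rightarrow> 'a \<Rightarrow> real) \<Rightarrow> nat \<Rightarrow> 'a \<Rightarrow> 'a set \<Rightarrow> bool" where
  "walk_supported_on w m x S \<longleftrightarrow>
     (\<forall>T A. finite T \<longrightarrow> S \<subseteq> T \<longrightarrow> walk_prob w m x A = (\<Sum>y\<in>T \<inter> A. walk_prob w m x {y}))"

lemma walk_prob_finite_support:
  assumes g: "wgraph V w" and "x \<in> V"
  shows "\<exists>S. finite S \<and> S \<subseteq> V \<and> walk_supported_on w m x S"
  using \<open>x \<in> V\<close>
proof (induction m arbitrary: x)
  case 0
  have "walk_prob w 0 x A = (\<Sum>y\<in>T \<inter> A. walk_prob w 0 x {y})" if "finite T" "x \<in> T" for T A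
  proof -
    have "(\<Sum>y\<in>T \<inter> A. indicator {y} x :: real) = (\<Sum>y\<in>T \<inter> A. if y = x then 1 else 0)"
      by (intro sum.cong) (auto simp: indicator_def)
    also have "\<dots> = indicator A x" using that by (simp add: sum.delta' indicator_def)
    finally show ?thesis by simp
  qed
  with 0 show ?case unfolding walk_supported_on_def by blast
next
  case (Suc m)
  define N where "N = {z. 0 < w x z}"
  have N: "finite N" "N \<subseteq> V"
    using wgraph_finite_neighbours[OF g] wgraph_edge_in_vertices[OF g] by (auto simp: N_def)
  have "\<forall>z\<in>N. \<exists>S. finite S \<and> S \<subseteq> V \<and> walk_supported_on w m z S"
    using Suc.IH N(2) by blast
  then obtain S where S: "\<forall>z\<in>N. finite (S z) \<and> S z \<subseteq> V \<and> walk_supported_on w m z (S z)"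
    by metis
  have "walk_prob w (Suc m) x A = (\<Sum>y\<in>T \<inter> A. walk_prob w (Suc m) x {y})"
    if T: "finite T" "(\<Union>z\<in>N. S z) \<subseteq> T" for T A
  proof -
    have "(\<Sum>y\<in>T \<inter> A. walk_prob w (Suc m) x {y})
        = (\<Sum>y\<in>T \<inter> A. \<Sum>z\<in>N. w x z / deg w x * walk_prob w m z {y})"
      by (simp add: N_def)
    also have "\<dots> = (\<Sum>z\<in>N. w x z / deg w x * (\<Sum>y\<in>T \<inter> A. walk_prob w m z {y}))"
      by (subst sum.swap) (simp add: sum_distrib_left)
    also have "\<dots> = (\<Sum>z\<in>N. w x z / deg w x * walk_prob w m z A)"
    proof (intro sum.cong refl arg_cong2[where f = "(*)"])
      fix z assume "z \<in> N"
      then have "walk_supported_on w m z (S z)" "S z \<subseteq> T" using S T by auto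
      then show "(\<Sum>y\<in>T \<inter> A. walk_prob w m z {y}) = walk_prob w m z A"
        using T(1) unfolding walk_supported_on_def by metis
    qed
    finally show ?thesis by (simp add: N_def)
  qed
  moreover have "finite (\<Union>z\<in>N. S z)" "(\<Union>z\<in>N. S z) \<subseteq> V" using S N by auto
  ultimately show ?case unfolding walk_supported_on_def by blast
qed

lemma walk_supported_on_mono:
  "walk_supported_on w m x S \<Longrightarrow> S \<subseteq> S' \<Longrightarrow> walk_supported_on w m x S'"
  unfolding walk_supported_on_def by blast

lemma walk_prob_outside_support:
  assumes "walk_supported_on w m x S" "finite S" "y \<notin> S"
  shows "walk_prob w m x {y} = 0"
proof -
  have "walk_prob w m x {y} = (\<Sum>y'\<in>S \<inter> {y}. walk_prob w m x {y'})"
    using assms(1,2) unfolding walk_supported_on_def by blast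
  also have "S \<inter> {y} = {}" using assms(3) by blast
  finally show ?thesis by simp
qed

lemma smoothed_walk_eq_sum:
  assumes g: "wgraph V w" and x: "x \<in> V"
  obtains S where "finite S" "S \<subseteq> V"
    "\<And>A. (walk_prob w m x A + walk_prob w (Suc m) x A) / 2 = (\<Sum>y\<in>S \<inter> A. deg w y * qG w m x y)"
    "\<And>y. y \<notin> S \<Longrightarrow> qG w m x y = 0"
proof -
  obtain S1 S2 where S: "finite S1" "S1 \<subseteq> V" "walk_supported_on w m x S1"
    "finite S2" "S2 \<subseteq> V" "walk_supported_on w (Suc m) x S2"
    using walk_prob_finite_support[OF g x] by metis
  define S where "S = S1 \<union> S2"
  have fin: "finite S" and SV: "S \<subseteq> V" using S by (auto simp: S_def)
  have supp: "walk_supported_on w m x S" "walk_supported_on w (Suc m) x S"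
    using S walk_supported_on_mono[of w _ x _ S] by (auto simp: S_def)
  have "(walk_prob w m x A + walk_prob w (Suc m) x A) / 2 = (\<Sum>y\<in>S \<inter> A. deg w y * qG w m x y)" for A
  proof -
    have "deg w y * qG w m x y = (walk_prob w m x {y} + walk_prob w (Suc m) x {y}) / 2" if "y \<in> S" for y
      using deg_pos[OF g] SV that by (force simp: qG_def pG_def field_simps)
    then have "(\<Sum>y\<in>S \<inter> A. deg w y * qG w m x y)
        = (\<Sum>y\<in>S \<inter> A. walk_prob w m x {y}) / 2 + (\<Sum>y\<in>S \<inter> A. walk_prob w (Suc m) x {y}) / 2"
      by (simp add: sum.distrib add_divide_distrib flip: sum_divide_distrib)
    also have "\<dots> = (walk_prob w m x A + walk_prob w (Suc m) x A) / 2"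
      using supp fin unfolding walk_supported_on_def by (metis add_divide_distrib order_refl)
    finally show ?thesis by simp
  qed
  moreover have "qG w m x y = 0" if "y \<notin> S" for y
    using walk_prob_outside_support[OF supp(1) fin that] walk_prob_outside_support[OF supp(2) fin that]
    by (simp add: qG_def pG_def del: walk_prob.simps)
  ultimately show ?thesis using that fin SV by blast
qed

lemma sum_deg_le_gmeasure:
  assumes "wgraph V w" "finite S" "S \<subseteq> B"
  shows "ennreal (\<Sum>y\<in>S. deg w y) \<le> gmeasure w B"
proof -
  have "ennreal (\<Sum>y\<in>S. deg w y) = (\<Sum>\<^sub>\<infinity>y\<in>S. ennreal (deg w y))"
    using assms(2) deg_nonneg[OF assms(1)] by (simp add: sum_ennreal)
  also have "\<dots> \<le> gmeasure w B"
    unfolding gmeasure_def using assms(3)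
    by (intro infsum_mono_neutral) (auto simp: nonneg_summable_on_complete)
  finally show ?thesis .
qed

lemma gmeasure_eq_sum_deg:
  assumes g: "wgraph V w" and "finite S" "S \<subseteq> B" "B \<inter> V \<subseteq> S"
  shows "gmeasure w B = ennreal (\<Sum>y\<in>S. deg w y)"
proof -
  have "gmeasure w B = (\<Sum>\<^sub>\<infinity>y\<in>S. ennreal (deg w y))"
    unfolding gmeasure_def using assms deg_eq_0_outside[OF g] by (intro infsum_cong_neutral) force+
  also have "\<dots> = ennreal (\<Sum>y\<in>S. deg w y)"
    using assms deg_nonneg[OF g] by (simp add: sum_ennreal)
  finally show ?thesis .
qed

lemma smoothed_walk_close_to_gmeasure:
  assumes g: "wgraph V w" and x: "x \<in> V" and fin: "gmeasure w B < \<infinity>" and "0 \<le> \<eta>"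
    and near: "\<And>y. y \<in> B \<inter> V \<Longrightarrow> \<bar>c * qG w m x y - Q\<bar> \<le> \<eta>"
  shows "\<bar>c * ((walk_prob w m x B + walk_prob w (Suc m) x B) / 2) - Q * enn2real (gmeasure w B)\<bar>
    \<le> \<eta> * enn2real (gmeasure w B)"
proof -
  obtain S where S: "finite S" "S \<subseteq> V"
    "(walk_prob w m x B + walk_prob w (Suc m) x B) / 2 = (\<Sum>y\<in>S \<inter> B. deg w y * qG w m x y)"
    "\<And>y. y \<notin> S \<Longrightarrow> qG w m x y = 0"
    using smoothed_walk_eq_sum[OF g x] by metis
  define D where "D = enn2real (gmeasure w B)"
  define D' where "D' = (\<Sum>y\<in>S \<inter> B. deg w y)"
  have D'_nonneg: "0 \<le> D'" unfolding D'_def using deg_nonneg[OF g] by (simp add: sum_nonneg)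
  have "ennreal D' \<le> gmeasure w B" using sum_deg_le_gmeasure[OF g] S(1) by (simp add: D'_def)
  then have "D' \<le> D" using enn2real_mono[of "ennreal D'" "gmeasure w B"] fin D'_nonneg by (simp add: D_def)
  have "\<bar>c * (\<Sum>y\<in>S \<inter> B. deg w y * qG w m x y) - Q * D'\<bar> = \<bar>\<Sum>y\<in>S \<inter> B. deg w y * (c * qG w m x y - Q)\<bar>"
    by (simp add: D'_def sum_distrib_left sum_subtractf algebra_simps)
  also have "\<dots> \<le> (\<Sum>y\<in>S \<inter> B. deg w y * \<eta>)"
  proof (rule order_trans[OF sum_abs sum_mono])
    fix y assume "y \<in> S \<inter> B"
    then show "\<bar>deg w y * (c * qG w m x y - Q)\<bar> \<le> deg w y * \<eta>"
      using near S(2) deg_nonneg[OF g, of y] by (auto simp: abs_mult intro: mult_left_mono)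
  qed
  also have "\<dots> = \<eta> * D'" by (simp add: D'_def sum_distrib_left mult.commute)
  finally have close_on_support: "\<bar>c * (\<Sum>y\<in>S \<inter> B. deg w y * qG w m x y) - Q * D'\<bar> \<le> \<eta> * D'" .
  have "\<bar>Q\<bar> * (D - D') \<le> \<eta> * (D - D')"
  proof (cases "B \<inter> V \<subseteq> S")
    case True
    then have "D = D'"
      using gmeasure_eq_sum_deg[OF g, of "S \<inter> B" B] S(1) D'_nonneg by (simp add: D_def D'_def)
    then show ?thesis by simp
  next
    case False
    \<comment> \<open>the kernel vanishes off the support of the walk, which forces \<bar>Q\<bar> \<le> \<eta>\<close>
    then obtain y where "y \<in> B \<inter> V" "y \<notin> S" by blast
    then have "\<bar>Q\<bar> \<le> \<eta>" using near S(4) by fastforce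
    then show ?thesis using \<open>D' \<le> D\<close> by (intro mult_right_mono) auto
  qed
  moreover have "\<bar>Q * (D' - D)\<bar> = \<bar>Q\<bar> * (D - D')" using \<open>D' \<le> D\<close> by (simp add: abs_mult)
  ultimately show ?thesis
    unfolding S(3) D_def[symmetric] using close_on_support
    by (smt (verit, best) abs_triangle_ineq right_diff_distrib)
qed

lemma ratio_estimate:
  fixes W d v Q c \<eta> \<eta>' :: real
  assumes "\<bar>W - Q * d\<bar> \<le> \<eta> * d" "\<bar>W - c * v\<bar> \<le> \<eta>' + \<eta> * v" "\<bar>d - v\<bar> \<le> \<eta>'"
    and "\<eta>' \<le> v / 2" "\<eta>' * (1 + \<bar>c\<bar>) \<le> \<eta> * v" "0 < v"
  shows "\<bar>Q - c\<bar> \<le> 7 * \<eta>"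
proof -
  have d: "v / 2 \<le> d" using assms(3,4) by linarith
  have "0 \<le> \<eta>'" using assms(3) by linarith
  then have "0 \<le> \<eta>" using assms(5,6) by (smt (verit) mult_nonneg_nonneg zero_le_mult_iff)
  have "\<bar>c * (v - d)\<bar> \<le> \<bar>c\<bar> * \<eta>'" using assms(3) by (simp add: abs_mult mult_left_mono abs_minus_commute)
  have "\<bar>Q - c\<bar> * d = \<bar>(Q - c) * d\<bar>" using d assms(6) by (simp add: abs_mult)
  also have "\<dots> = \<bar>(Q * d - W) + (W - c * v) + c * (v - d)\<bar>" by (simp add: algebra_simps)
  also have "\<dots> \<le> \<eta> * d + (\<eta>' + \<eta> * v) + \<bar>c\<bar> * \<eta>'"
    using assms(1,2) \<open>\<bar>c * (v - d)\<bar> \<le> \<bar>c\<bar> * \<eta>'\<close> by (smt (verit) abs_minus_commute abs_triangle_ineq)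
  also have "\<dots> \<le> \<eta> * d + 2 * (\<eta> * v)" using assms(5) by (simp add: algebra_simps)
  also have "\<dots> \<le> 7 * \<eta> * d"
    using mult_left_mono[of v "2 * d" \<eta>] mult_nonneg_nonneg[of \<eta> d] d assms(6) \<open>0 \<le> \<eta>\<close> by linarith
  finally show ?thesis using d assms(6) by (simp add: mult.commute)
qed

lemma rescaled_kernel_estimate:
  assumes g: "wgraph V w" and x: "x \<in> V" and "0 < \<beta>" "gmeasure w B < \<infinity>" "0 \<le> \<eta>"
    and near: "\<And>y. y \<in> B \<inter> V \<Longrightarrow> \<bar>\<beta> * qG w m x y - Q\<bar> \<le> \<eta>"
    and walk: "\<bar>(walk_prob w m x B + walk_prob w (Suc m) x B) / 2 - c * v\<bar> \<le> \<eta>' + \<eta> * v"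
    and meas: "\<bar>enn2real (gmeasure w B) / \<beta> - v\<bar> \<le> \<eta>'"
    and "\<eta>' \<le> v / 2" "\<eta>' * (1 + \<bar>c\<bar>) \<le> \<eta> * v" "0 < v"
  shows "\<bar>Q - c\<bar> \<le> 7 * \<eta>"
proof -
  define W where "W = (walk_prob w m x B + walk_prob w (Suc m) x B) / 2"
  define D where "D = enn2real (gmeasure w B)"
  have "\<beta> * \<bar>W - Q * (D / \<beta>)\<bar> = \<bar>\<beta> * (W - Q * (D / \<beta>))\<bar>"
    using \<open>0 < \<beta>\<close> by (simp add: abs_mult)
  also have "\<dots> = \<bar>\<beta> * W - Q * D\<bar>"
    using \<open>0 < \<beta>\<close> by (simp add: algebra_simps)
  also have "\<dots> \<le> \<eta> * D"
    using smoothed_walk_close_to_gmeasure[OF g x \<open>gmeasure w B < \<infinity>\<close> \<open>0 \<le> \<eta>\<close> near]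
    by (simp add: W_def D_def)
  finally have "\<bar>W - Q * (D / \<beta>)\<bar> \<le> \<eta> * (D / \<beta>)"
    using \<open>0 < \<beta>\<close> by (simp add: field_simps)
  from ratio_estimate[OF this] show ?thesis
    using walk meas assms(9-11) unfolding W_def D_def by blast
qed

lemma closed_if_compact_Int_cball:
  fixes F :: "'a::metric_space set"
  assumes "\<And>x r. r > 0 \<Longrightarrow> compact (F \<inter> cball x r)"
  shows "closed F"
proof -
  have "y \<in> F" if "y \<in> closure F" for y
  proof -
    have "y \<in> ball y 1 \<inter> closure F" using that by simp
    also have "\<dots> \<subseteq> closure (ball y 1 \<inter> F)" by (rule open_Int_closure_subset) simp
    also have "\<dots> \<subseteq> closure (F \<inter> cball y 1)" by (intro closure_mono) auto
    also have "\<dots> = F \<inter> cball y 1" using assms[of 1 y] by (simp add: compact_imp_closed)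
    finally show ?thesis by simp
  qed
  then show ?thesis using closure_subset_eq by blast
qed

lemma set_integral_close_to_const:
  fixes f :: "'a::metric_space \<Rightarrow> real"
  assumes \<nu>: "sets \<nu> = sets borel" and A: "A \<in> sets borel" "emeasure \<nu> A < \<infinity>"
    and f: "continuous_on A f" and close: "\<And>y. y \<in> A \<Longrightarrow> \<bar>f y - c\<bar> \<le> \<eta>"
  shows "\<bar>(LINT y:A|\<nu>. f y) - c * measure \<nu> A\<bar> \<le> \<eta> * measure \<nu> A"
proof -
  have A\<nu>: "A \<in> sets \<nu>" using A \<nu> by simp
  have const: "set_integrable \<nu> A (\<lambda>_. k)" for k :: real
    unfolding set_integrable_def using A\<nu> A(2)
    by (intro integrable_scaleR_left integrable_real_indicator) auto
  have "set_borel_measurable \<nu> A f"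
    unfolding set_borel_measurable_def
    using borel_measurable_continuous_on_indicator[OF A(1) f] measurable_cong_sets[OF \<nu> refl] by blast
  then have "set_integrable \<nu> A f"
    by (rule set_integrable_bound[OF const[of "\<bar>c\<bar> + \<eta>"]]) (use close in \<open>force intro!: AE_I2\<close>)
  have const_integral: "(LINT y:A|\<nu>. k) = k * measure \<nu> A" for k :: real
    using set_integral_const[OF A\<nu>, of k] A(2) by (simp add: mult.commute)
  have "(LINT y:A|\<nu>. c - \<eta>) \<le> (LINT y:A|\<nu>. f y)" "(LINT y:A|\<nu>. f y) \<le> (LINT y:A|\<nu>. c + \<eta>)"
    using close by (auto intro!: set_integral_mono const \<open>set_integrable \<nu> A f\<close>) (force simp: abs_le_iff)+
  then show ?thesis unfolding const_integral by (simp add: abs_le_iff algebra_simps)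
qed

lemma uniformly_continuous_on_Icc_times_compact:
  fixes F :: "'a::metric_space set" and q :: "real \<Rightarrow> 'a \<Rightarrow> real"
  assumes q: "continuous_on ({0<..} \<times> F) (\<lambda>(t, x). q t x)" and K: "compact K" "K \<subseteq> F"
    and "0 < a" "0 < \<eta>"
  obtains \<delta> where "0 < \<delta>" "\<And>s t y z. s \<in> {a..b} \<Longrightarrow> t \<in> {a..b} \<Longrightarrow> y \<in> K \<Longrightarrow> z \<in> K \<Longrightarrow>
    \<bar>s - t\<bar> + dist y z < \<delta> \<Longrightarrow> \<bar>q s y - q t z\<bar> < \<eta>"
proof -
  have "continuous_on ({a..b} \<times> K) (\<lambda>(t, x). q t x)"
    by (rule continuous_on_subset[OF q]) (use \<open>0 < a\<close> K(2) in auto)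
  then have "uniformly_continuous_on ({a..b} \<times> K) (\<lambda>(t, x). q t x)"
    by (intro compact_uniformly_continuous compact_Times K(1) compact_Icc)
  then obtain \<delta> where "0 < \<delta>" and \<delta>: "\<forall>p\<in>{a..b} \<times> K. \<forall>p'\<in>{a..b} \<times> K.
      dist p' p < \<delta> \<longrightarrow> dist ((\<lambda>(t, x). q t x) p') ((\<lambda>(t, x). q t x) p) < \<eta>"
    unfolding uniformly_continuous_on_def using \<open>0 < \<eta>\<close> by blast
  have "\<bar>q s y - q t z\<bar> < \<eta>"
    if "s \<in> {a..b}" "t \<in> {a..b}" "y \<in> K" "z \<in> K" "\<bar>s - t\<bar> + dist y z < \<delta>" for s t y z
  proof -
    have "dist (s, y) (t, z) \<le> \<bar>s - t\<bar> + dist y z"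
      unfolding dist_Pair_Pair using sqrt_sum_squares_le_sum_abs[of "dist s t" "dist y z"]
      by (simp add: dist_real_def)
    then show ?thesis using \<delta> that by (fastforce simp: dist_real_def)
  qed
  with \<open>0 < \<delta>\<close> that show ?thesis by blast
qed

lemma eventually_bound_from_limsup_SUP:
  fixes P :: "real \<Rightarrow> nat \<Rightarrow> 'a \<Rightarrow> 'b \<Rightarrow> 'c \<Rightarrow> bool" and f :: "nat \<Rightarrow> 'a \<Rightarrow> 'b \<Rightarrow> 'c \<Rightarrow> real"
  assumes lim: "((\<lambda>\<delta>. limsup (\<lambda>n. SUP (x, y, t) \<in> {(x, y, t). P \<delta> n x y t}. ereal (f n x y t)))
      \<longlongrightarrow> 0) (at_right 0)"
    and "0 < \<eta>"
  obtains \<delta> where "0 < \<delta>" "eventually (\<lambda>n. \<forall>x y t. P \<delta> n x y t \<longrightarrow> f n x y t < \<eta>) sequentially"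
proof -
  have "eventually (\<lambda>\<delta>. limsup (\<lambda>n. SUP (x, y, t) \<in> {(x, y, t). P \<delta> n x y t}. ereal (f n x y t))
      < ereal \<eta>) (at_right 0)"
    using order_tendstoD(2)[OF lim] \<open>0 < \<eta>\<close> by simp
  then obtain b where "0 < b" and b: "\<And>\<delta>. 0 < \<delta> \<Longrightarrow> \<delta> < b \<Longrightarrow>
      limsup (\<lambda>n. SUP (x, y, t) \<in> {(x, y, t). P \<delta> n x y t}. ereal (f n x y t)) < ereal \<eta>"
    unfolding eventually_at_right_field by blast
  define \<delta> where "\<delta> = b / 2"
  have "0 < \<delta>"
    and "limsup (\<lambda>n. SUP (x, y, t) \<in> {(x, y, t). P \<delta> n x y t}. ereal (f n x y t)) < ereal \<eta>"
    using \<open>0 < b\<close> b[of \<delta>] by (auto simp: \<delta>_def)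
  then have "eventually (\<lambda>n. (SUP (x, y, t) \<in> {(x, y, t). P \<delta> n x y t}. ereal (f n x y t)) < ereal \<eta>)
      sequentially"
    by (simp add: Limsup_lessD)
  then have "eventually (\<lambda>n. \<forall>x y t. P \<delta> n x y t \<longrightarrow> f n x y t < \<eta>) sequentially"
  proof eventually_elim
    case (elim n)
    show ?case
    proof (intro allI impI)
      fix x y t assume "P \<delta> n x y t"
      then have "(x, y, t) \<in> {(x, y, t). P \<delta> n x y t}" by simp
      from SUP_lessD[OF elim this] show "f n x y t < \<eta>" by simp
    qed
  qed
  with \<open>0 < \<delta>\<close> that show ?thesis by blast
qed

lemma SUP_abs_tendsto_0I:
  fixes f :: "nat \<Rightarrow> 'a \<Rightarrow> real"
  assumes "T \<noteq> {}" and small: "\<And>\<epsilon>. 0 < \<epsilon> \<Longrightarrow> eventually (\<lambda>n. \<forall>t\<in>T. \<bar>f n t\<bar> \<le> \<epsilon>) sequentially"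
  shows "(\<lambda>n. SUP t\<in>T. \<bar>f n t\<bar>) \<longlonglongrightarrow> 0"
proof (rule tendstoI)
  fix \<epsilon> :: real assume "0 < \<epsilon>"
  from small[of "\<epsilon> / 2"] \<open>0 < \<epsilon>\<close> have "eventually (\<lambda>n. \<forall>t\<in>T. \<bar>f n t\<bar> \<le> \<epsilon> / 2) sequentially"
    by simp
  then show "eventually (\<lambda>n. dist (SUP t\<in>T. \<bar>f n t\<bar>) 0 < \<epsilon>) sequentially"
  proof eventually_elim
    case (elim n)
    then have "bdd_above ((\<lambda>t. \<bar>f n t\<bar>) ` T)" by (intro bdd_aboveI2) blast
    then have "0 \<le> (SUP t\<in>T. \<bar>f n t\<bar>)" using \<open>T \<noteq> {}\<close> by (metis abs_ge_zero cSUP_upper2 ex_in_conv)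
    moreover have "(SUP t\<in>T. \<bar>f n t\<bar>) \<le> \<epsilon> / 2" using elim \<open>T \<noteq> {}\<close> by (intro cSUP_least) auto
    ultimately show ?case using \<open>0 < \<epsilon>\<close> by (simp add: dist_real_def)
  qed
qed

lemma Suc_nat_floor_shift:
  fixes \<gamma> t :: real
  assumes "0 < \<gamma>" "0 \<le> t"
  shows "Suc (nat \<lfloor>\<gamma> * t\<rfloor>) = nat \<lfloor>\<gamma> * (t + 1 / \<gamma>)\<rfloor>"
proof -
  have "\<gamma> * (t + 1 / \<gamma>) = \<gamma> * t + 1" using assms(1) by (simp add: field_simps)
  then show ?thesis using assms by (simp add: nat_add_distrib)
qed

section \<open>The scaling-limit setting\<close>

locale rescaled_walk_limit =
  fixes F :: "'a::metric_space set"
    and \<rho> :: 'a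
    and \<nu> :: "'a measure"
    and q :: "real \<Rightarrow> 'a \<Rightarrow> real"
    and V :: "nat \<Rightarrow> 'a set"
    and w :: "nat \<Rightarrow> 'a \<Rightarrow> 'a \<Rightarrow> real"
    and \<alpha> \<beta> \<gamma> :: "nat \<Rightarrow> real"
    and g :: "nat \<Rightarrow> 'a \<Rightarrow> 'a"
  assumes F_bcompact: "\<And>x r. r > 0 \<Longrightarrow> compact (F \<inter> cball x r)"
    and nu_sets: "sets \<nu> = sets borel"
    and nu_ext: "\<And>A. A \<in> sets borel \<Longrightarrow> emeasure \<nu> A = emeasure \<nu> (A \<inter> F)"
    and nu_locfin: "\<And>x. x \<in> F \<Longrightarrow> \<exists>r>0. emeasure \<nu> (ball x r \<inter> F) < \<infinity>"
    and nu_full: "\<And>x r. x \<in> F \<Longrightarrow> r > 0 \<Longrightarrow> emeasure \<nu> (ball x r \<inter> F) > 0"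
    and q_cont: "continuous_on ({0<..} \<times> F) (\<lambda>(t, x). q t x)"
    and graphs: "\<And>n. n \<ge> 1 \<Longrightarrow> wgraph (V n) (w n)"
    and V_root: "\<And>n. n \<ge> 1 \<Longrightarrow> \<rho> \<in> V n"
    and alpha_nonneg: "\<And>n. \<alpha> n \<ge> 0" and alpha_div: "filterlim \<alpha> at_top sequentially"
    and beta_div: "filterlim \<beta> at_top sequentially"
    and gamma_div: "filterlim \<gamma> at_top sequentially"
    and g_min: "\<And>n x. n \<ge> 1 \<Longrightarrow> g n x \<in> V n \<and> (\<forall>v \<in> V n. dist x (g n x) \<le> dist x v)"
    and A1a_upper: "\<exists>\<alpha>'. (\<forall>n. \<alpha>' n \<ge> 0) \<and> \<alpha>' \<in> o(\<alpha>) \<and>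
          (\<forall>r>0. \<exists>c2 n0. \<forall>n\<ge>n0. \<forall>x \<in> V n \<inter> ball \<rho> r. \<forall>y \<in> V n \<inter> ball \<rho> r.
             real (gdist (w n) x y) \<le> c2 * \<alpha> n * dist x y + \<alpha>' n)"
    and A1b: "\<And>r. r > 0 \<Longrightarrow>
          (\<lambda>n. SUP x \<in> ball \<rho> r \<inter> F. infdist x (V n)) \<longlonglongrightarrow> 0"
    and A1c: "\<And>x r. x \<in> F \<Longrightarrow> r > 0 \<Longrightarrow>
          (\<lambda>n. ennreal (1 / \<beta> n) * gmeasure (w n) (ball x r)) \<longlonglongrightarrow> emeasure \<nu> (ball x r)"
    and A1d: "\<And>a' b' x r. 0 < a' \<Longrightarrow> a' \<le> b' \<Longrightarrow> x \<in> F \<Longrightarrow> r > 0 \<Longrightarrow>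
          uniform_limit {a'..b'}
            (\<lambda>n t. walk_prob (w n) (nat \<lfloor>\<gamma> n * t\<rfloor>) \<rho> (ball x r))
            (\<lambda>t. (LINT y : ball x r \<inter> F | \<nu>. q t y)) sequentially"
    and A2: "\<And>a' b' r. 0 < a' \<Longrightarrow> a' \<le> b' \<Longrightarrow> r > 0 \<Longrightarrow>
          ((\<lambda>\<delta>. limsup (\<lambda>n.
              SUP (x, y, t) \<in> {(x, y, t). x \<in> gball (V n) (w n) \<rho> (\<alpha> n * r) \<and>
                                        y \<in> gball (V n) (w n) \<rho> (\<alpha> n * r) \<and>
                                        real (gdist (w n) x y) \<le> \<alpha> n * \<delta> \<and>
                                        t \<in> {a'..b'}}.
                ereal (\<beta> n * \<bar>qG (w n) (nat \<lfloor>\<gamma> n * t\<rfloor>) \<rho> x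
                               - qG (w n) (nat \<lfloor>\<gamma> n * t\<rfloor>) \<rho> y\<bar>)))
           \<longlongrightarrow> 0) (at_right 0)"
begin

lemma ball_Int_F_measurable: "ball x r \<inter> F \<in> sets \<nu>"
  using closed_if_compact_Int_cball[OF F_bcompact] nu_sets by simp

lemma emeasure_small_ball_finite:
  assumes "x \<in> F"
  obtains r0 where "0 < r0" "\<And>r. r \<le> r0 \<Longrightarrow> emeasure \<nu> (ball x r \<inter> F) < \<infinity>"
proof -
  obtain r0 where "0 < r0" "emeasure \<nu> (ball x r0 \<inter> F) < \<infinity>" using nu_locfin[OF assms] by blast
  moreover have "emeasure \<nu> (ball x r \<inter> F) \<le> emeasure \<nu> (ball x r0 \<inter> F)" if "r \<le> r0" for r
    using that by (intro emeasure_mono ball_Int_F_measurable) auto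
  ultimately show ?thesis using that by (meson order_le_less_trans)
qed

lemma eventually_nearest_vertex_close:
  assumes "x \<in> F" "0 < r"
  shows "eventually (\<lambda>n. g n x \<in> V n \<and> dist x (g n x) < r) sequentially"
proof -
  define R where "R = dist \<rho> x + 1"
  have "eventually (\<lambda>n. (SUP y \<in> ball \<rho> R \<inter> F. infdist y (V n)) < r) sequentially"
    using order_tendstoD(2)[OF A1b \<open>0 < r\<close>] by (simp add: R_def add_nonneg_pos)
  with eventually_ge_at_top[of 1] show ?thesis
  proof eventually_elim
    case (elim n)
    have "\<rho> \<in> V n" using V_root elim(1) by blast
    have "bdd_above ((\<lambda>y. infdist y (V n)) ` (ball \<rho> R \<inter> F))"
    proof (rule bdd_aboveI2)
      fix y assume "y \<in> ball \<rho> R \<inter> F"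
      then have "dist y \<rho> \<le> R" by (simp add: dist_commute)
      then show "infdist y (V n) \<le> R" using infdist_le[OF \<open>\<rho> \<in> V n\<close>, of y] by linarith
    qed
    moreover have "x \<in> ball \<rho> R \<inter> F" using assms(1) by (simp add: R_def)
    ultimately have "infdist x (V n) < r" using elim(2) by (meson cSUP_upper order_le_less_trans)
    then obtain v where "v \<in> V n" "dist x v < r"
      using infdist_notempty[of "V n" x] \<open>\<rho> \<in> V n\<close>
      by (metis cINF_less_iff bdd_below_image_dist empty_iff)
    then show ?case using g_min[OF elim(1), of x] by force
  qed
qed

lemma eventually_gdist_le:
  assumes "0 < R0"
  obtains C where "0 < C" "\<And>\<kappa>. 0 < \<kappa> \<Longrightarrow> eventually (\<lambda>n. \<forall>u \<in> V n \<inter> ball \<rho> R0. \<forall>v \<in> V n \<inter> ball \<rho> R0.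
      real (gdist (w n) u v) \<le> C * \<alpha> n * dist u v + \<kappa> * \<alpha> n) sequentially"
proof -
  obtain \<alpha>' c2 n0 where "\<alpha>' \<in> o(\<alpha>)" "\<And>n. \<alpha>' n \<ge> 0"
    and c2: "\<And>n u v. n \<ge> n0 \<Longrightarrow> u \<in> V n \<inter> ball \<rho> R0 \<Longrightarrow> v \<in> V n \<inter> ball \<rho> R0 \<Longrightarrow>
      real (gdist (w n) u v) \<le> c2 * \<alpha> n * dist u v + \<alpha>' n"
    using A1a_upper \<open>0 < R0\<close> by meson
  define C where "C = max c2 1"
  have "eventually (\<lambda>n. \<forall>u \<in> V n \<inter> ball \<rho> R0. \<forall>v \<in> V n \<inter> ball \<rho> R0.
      real (gdist (w n) u v) \<le> C * \<alpha> n * dist u v + \<kappa> * \<alpha> n) sequentially" if "0 < \<kappa>" for \<kappa>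
  proof -
    have "eventually (\<lambda>n. \<alpha>' n \<le> \<kappa> * \<alpha> n) sequentially"
      using landau_o.smallD[OF \<open>\<alpha>' \<in> o(\<alpha>)\<close> \<open>0 < \<kappa>\<close>] \<open>\<And>n. \<alpha>' n \<ge> 0\<close> alpha_nonneg by simp
    with eventually_ge_at_top[of n0] show ?thesis
    proof eventually_elim
      case (elim n)
      have "c2 * \<alpha> n * dist u v \<le> C * \<alpha> n * dist u v" for u v
        using mult_right_mono[of c2 C "\<alpha> n * dist u v"] alpha_nonneg[of n] by (simp add: C_def mult.assoc)
      then show ?case using c2[OF elim(1)] elim(2) by (smt (verit))
    qed
  qed
  moreover have "0 < C" by (simp add: C_def)
  ultimately show ?thesis using that by blast
qed

lemma eventually_graph_distance_controlled:
  assumes "0 < R0"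
  obtains C where "0 < C" "\<And>\<delta>. 0 < \<delta> \<Longrightarrow> eventually (\<lambda>n.
      (\<forall>u \<in> V n \<inter> ball \<rho> R0. u \<in> gball (V n) (w n) \<rho> (\<alpha> n * (C * R0 + 1))) \<and>
      (\<forall>u \<in> V n \<inter> ball \<rho> R0. \<forall>v \<in> V n \<inter> ball \<rho> R0.
         dist u v \<le> \<delta> / (2 * C) \<longrightarrow> real (gdist (w n) u v) \<le> \<alpha> n * \<delta>)) sequentially"
proof -
  obtain C where "0 < C" and gdist_le: "\<And>\<kappa>. 0 < \<kappa> \<Longrightarrow> eventually (\<lambda>n.
      \<forall>u \<in> V n \<inter> ball \<rho> R0. \<forall>v \<in> V n \<inter> ball \<rho> R0.
        real (gdist (w n) u v) \<le> C * \<alpha> n * dist u v + \<kappa> * \<alpha> n) sequentially"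
    using eventually_gdist_le[OF \<open>0 < R0\<close>] by blast
  have "eventually (\<lambda>n.
      (\<forall>u \<in> V n \<inter> ball \<rho> R0. u \<in> gball (V n) (w n) \<rho> (\<alpha> n * (C * R0 + 1))) \<and>
      (\<forall>u \<in> V n \<inter> ball \<rho> R0. \<forall>v \<in> V n \<inter> ball \<rho> R0.
         dist u v \<le> \<delta> / (2 * C) \<longrightarrow> real (gdist (w n) u v) \<le> \<alpha> n * \<delta>)) sequentially"
    if "0 < \<delta>" for \<delta>
  proof -
    define \<kappa> where "\<kappa> = min (\<delta> / 2) (1 / 2)"
    have "0 < \<kappa>" using \<open>0 < \<delta>\<close> by (simp add: \<kappa>_def)
    have "eventually (\<lambda>n. 1 \<le> \<alpha> n) sequentially" using alpha_div by (simp add: filterlim_at_top)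
    with gdist_le[OF \<open>0 < \<kappa>\<close>] eventually_ge_at_top[of 1] show ?thesis
    proof eventually_elim
      case (elim n)
      have \<kappa>: "\<kappa> * \<alpha> n \<le> \<delta> / 2 * \<alpha> n" "\<kappa> * \<alpha> n \<le> 1 / 2 * \<alpha> n"
        using elim(3) by (intro mult_right_mono; simp add: \<kappa>_def)+
      have "\<rho> \<in> V n \<inter> ball \<rho> R0" using V_root elim(2) \<open>0 < R0\<close> by simp
      have "u \<in> gball (V n) (w n) \<rho> (\<alpha> n * (C * R0 + 1))" if u: "u \<in> V n \<inter> ball \<rho> R0" for u
      proof -
        have "C * \<alpha> n * dist \<rho> u \<le> C * \<alpha> n * R0"
          using u \<open>0 < C\<close> elim(3) by (intro mult_left_mono) auto
        then have "real (gdist (w n) \<rho> u) \<le> C * \<alpha> n * R0 + 1 / 2 * \<alpha> n"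
          using elim(1)[rule_format, OF \<open>\<rho> \<in> V n \<inter> ball \<rho> R0\<close> u] \<kappa>(2) by linarith
        also have "\<dots> < \<alpha> n * (C * R0 + 1)" using elim(3) by (simp add: algebra_simps)
        finally show ?thesis using u by (simp add: gball_def)
      qed
      moreover have "real (gdist (w n) u v) \<le> \<alpha> n * \<delta>"
        if "u \<in> V n \<inter> ball \<rho> R0" "v \<in> V n \<inter> ball \<rho> R0" "dist u v \<le> \<delta> / (2 * C)" for u v
      proof -
        have "C * \<alpha> n * dist u v \<le> C * \<alpha> n * (\<delta> / (2 * C))"
          using that(3) \<open>0 < C\<close> elim(3) by (intro mult_left_mono) auto
        also have "\<dots> = \<delta> / 2 * \<alpha> n" using \<open>0 < C\<close> by simp
        finally have "C * \<alpha> n * dist u v \<le> \<delta> / 2 * \<alpha> n" .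
        moreover have "\<delta> / 2 * \<alpha> n + \<delta> / 2 * \<alpha> n = \<alpha> n * \<delta>" by simp
        ultimately show ?thesis using elim(1)[rule_format, OF that(1,2)] \<kappa>(1) by linarith
      qed
      ultimately show ?case by blast
    qed
  qed
  with \<open>0 < C\<close> that show ?thesis by blast
qed

lemma eventually_rescaled_qG_near_nearest_vertex:
  assumes x: "x \<in> F" and "0 < a" "a \<le> b" "0 < \<eta>"
  obtains r0 where "0 < r0" "\<And>r. 0 < r \<Longrightarrow> r \<le> r0 \<Longrightarrow> eventually (\<lambda>n. \<forall>t\<in>{a..b}. \<forall>y\<in>ball x r \<inter> V n.
      \<bar>\<beta> n * qG (w n) (nat \<lfloor>\<gamma> n * t\<rfloor>) \<rho> y - \<beta> n * qG (w n) (nat \<lfloor>\<gamma> n * t\<rfloor>) \<rho> (g n x)\<bar> < \<eta>)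
      sequentially"
proof -
  define R0 where "R0 = dist \<rho> x + 2"
  have "0 < R0" by (simp add: R0_def add_nonneg_pos)
  obtain C where "0 < C" and controlled: "\<And>\<delta>. 0 < \<delta> \<Longrightarrow> eventually (\<lambda>n.
      (\<forall>u \<in> V n \<inter> ball \<rho> R0. u \<in> gball (V n) (w n) \<rho> (\<alpha> n * (C * R0 + 1))) \<and>
      (\<forall>u \<in> V n \<inter> ball \<rho> R0. \<forall>v \<in> V n \<inter> ball \<rho> R0.
         dist u v \<le> \<delta> / (2 * C) \<longrightarrow> real (gdist (w n) u v) \<le> \<alpha> n * \<delta>)) sequentially"
    using eventually_graph_distance_controlled[OF \<open>0 < R0\<close>] by blast
  have "0 < C * R0 + 1" using \<open>0 < C\<close> \<open>0 < R0\<close> by (simp add: add_pos_pos)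
  obtain \<delta> where "0 < \<delta>" and oscillation: "eventually (\<lambda>n. \<forall>y z t.
      y \<in> gball (V n) (w n) \<rho> (\<alpha> n * (C * R0 + 1)) \<and> z \<in> gball (V n) (w n) \<rho> (\<alpha> n * (C * R0 + 1)) \<and>
      real (gdist (w n) y z) \<le> \<alpha> n * \<delta> \<and> t \<in> {a..b} \<longrightarrow>
      \<beta> n * \<bar>qG (w n) (nat \<lfloor>\<gamma> n * t\<rfloor>) \<rho> y - qG (w n) (nat \<lfloor>\<gamma> n * t\<rfloor>) \<rho> z\<bar> < \<eta>) sequentially"
    using eventually_bound_from_limsup_SUP[OF A2[OF \<open>0 < a\<close> \<open>a \<le> b\<close> \<open>0 < C * R0 + 1\<close>] \<open>0 < \<eta>\<close>]
    by blast
  define r0 where "r0 = min (\<delta> / (4 * C)) (1 / 2)"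
  have "0 < r0" using \<open>0 < \<delta>\<close> \<open>0 < C\<close> by (simp add: r0_def)
  moreover have "eventually (\<lambda>n. \<forall>t\<in>{a..b}. \<forall>y\<in>ball x r \<inter> V n.
      \<bar>\<beta> n * qG (w n) (nat \<lfloor>\<gamma> n * t\<rfloor>) \<rho> y - \<beta> n * qG (w n) (nat \<lfloor>\<gamma> n * t\<rfloor>) \<rho> (g n x)\<bar> < \<eta>)
      sequentially" if "0 < r" "r \<le> r0" for r
  proof -
    have "eventually (\<lambda>n. 0 \<le> \<beta> n) sequentially" using beta_div by (simp add: filterlim_at_top)
    with controlled[OF \<open>0 < \<delta>\<close>] oscillation eventually_nearest_vertex_close[OF x \<open>0 < r\<close>]
    show ?thesis
    proof eventually_elim
      case (elim n)
      have near: "u \<in> V n \<inter> ball \<rho> R0" if "u \<in> V n" "dist x u < r" for u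
        using dist_triangle[of \<rho> u x] that \<open>r \<le> r0\<close> by (simp add: R0_def r0_def dist_commute)
      show ?case
      proof (intro ballI)
        fix t y assume "t \<in> {a..b}" "y \<in> ball x r \<inter> V n"
        then have in_ball: "y \<in> V n \<inter> ball \<rho> R0" "g n x \<in> V n \<inter> ball \<rho> R0"
          using near elim(3) by auto
        have "dist y (g n x) < 2 * r"
          using dist_triangle[of y "g n x" x] elim(3) \<open>y \<in> ball x r \<inter> V n\<close> by (simp add: dist_commute)
        also have "\<dots> \<le> \<delta> / (2 * C)" using \<open>r \<le> r0\<close> \<open>0 < C\<close> by (simp add: r0_def field_simps)
        finally have "real (gdist (w n) y (g n x)) \<le> \<alpha> n * \<delta>"
          using elim(1) in_ball by simp
        then have "\<beta> n * \<bar>qG (w n) (nat \<lfloor>\<gamma> n * t\<rfloor>) \<rho> y - qG (w n) (nat \<lfloor>\<gamma> n * t\<rfloor>) \<rho> (g n x)\<bar> < \<eta>"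
          using elim(1,2) in_ball \<open>t \<in> {a..b}\<close> by simp
        then show "\<bar>\<beta> n * qG (w n) (nat \<lfloor>\<gamma> n * t\<rfloor>) \<rho> y - \<beta> n * qG (w n) (nat \<lfloor>\<gamma> n * t\<rfloor>) \<rho> (g n x)\<bar> < \<eta>"
          using elim(4) by (simp add: abs_mult right_diff_distrib[symmetric])
      qed
    qed
  qed
  ultimately show ?thesis using that by blast
qed

lemma continuous_on_q_time_slice: "0 < s \<Longrightarrow> continuous_on F (q s)"
  by (rule continuous_on_compose2[OF q_cont, of _ "\<lambda>y. (s, y)", simplified])
    (auto intro!: continuous_intros)

lemma q_bounded_on_Icc:
  assumes "x \<in> F" "0 < a"
  obtains M where "0 \<le> M" "\<And>t. t \<in> {a..b} \<Longrightarrow> \<bar>q t x\<bar> \<le> M"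
proof -
  have "continuous_on {a..b} (\<lambda>t. q t x)"
    by (rule continuous_on_compose2[OF q_cont, of _ "\<lambda>t. (t, x)", simplified])
      (use assms in \<open>auto intro!: continuous_intros\<close>)
  then have "bounded ((\<lambda>t. q t x) ` {a..b})" by (intro compact_imp_bounded compact_continuous_image) auto
  then obtain M where "\<And>t. t \<in> {a..b} \<Longrightarrow> \<bar>q t x\<bar> \<le> M" unfolding bounded_real by blast
  then show ?thesis using that[of "max M 0"] by fastforce
qed

lemma ball_integral_close_to_density:
  assumes x: "x \<in> F" and "0 < a" "0 < \<eta>"
  obtains \<delta> where "0 < \<delta>" "\<And>r s t. 0 < r \<Longrightarrow> r \<le> \<delta> \<Longrightarrow> emeasure \<nu> (ball x r \<inter> F) < \<infinity> \<Longrightarrow>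
      s \<in> {a..b} \<Longrightarrow> t \<in> {a..b} \<Longrightarrow> \<bar>s - t\<bar> < \<delta> \<Longrightarrow>
      \<bar>(LINT y : ball x r \<inter> F | \<nu>. q s y) - q t x * measure \<nu> (ball x r \<inter> F)\<bar>
        \<le> \<eta> * measure \<nu> (ball x r \<inter> F)"
proof -
  obtain \<delta> where "0 < \<delta>" and \<delta>: "\<And>s t y z. s \<in> {a..b} \<Longrightarrow> t \<in> {a..b} \<Longrightarrow>
      y \<in> F \<inter> cball x 1 \<Longrightarrow> z \<in> F \<inter> cball x 1 \<Longrightarrow> \<bar>s - t\<bar> + dist y z < \<delta> \<Longrightarrow> \<bar>q s y - q t z\<bar> < \<eta>"
    using uniformly_continuous_on_Icc_times_compact[OF q_cont F_bcompact[of 1 x] _ \<open>0 < a\<close> \<open>0 < \<eta>\<close>]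
    by auto
  have "\<bar>(LINT y : ball x r \<inter> F | \<nu>. q s y) - q t x * measure \<nu> (ball x r \<inter> F)\<bar>
      \<le> \<eta> * measure \<nu> (ball x r \<inter> F)"
    if "0 < r" "r \<le> min (\<delta> / 2) 1" "emeasure \<nu> (ball x r \<inter> F) < \<infinity>"
      "s \<in> {a..b}" "t \<in> {a..b}" "\<bar>s - t\<bar> < min (\<delta> / 2) 1" for r s t
  proof (rule set_integral_close_to_const[OF nu_sets _ that(3)])
    show "ball x r \<inter> F \<in> sets borel" using ball_Int_F_measurable nu_sets by simp
    show "continuous_on (ball x r \<inter> F) (q s)"
      using continuous_on_q_time_slice[of s] \<open>0 < a\<close> that(4) by (auto intro: continuous_on_subset)
    fix y assume "y \<in> ball x r \<inter> F"
    then show "\<bar>q s y - q t x\<bar> \<le> \<eta>"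
      using \<delta>[of s t y x] that x by (simp add: dist_commute)
  qed
  moreover have "0 < min (\<delta> / 2) 1" using \<open>0 < \<delta>\<close> by simp
  ultimately show ?thesis using that by blast
qed

lemma eventually_smoothed_walk_close:
  assumes x: "x \<in> F" and "0 < a" "a \<le> b" "0 < \<eta>"
  obtains r0 where "0 < r0" "\<And>r. r \<le> r0 \<Longrightarrow> emeasure \<nu> (ball x r \<inter> F) < \<infinity>" "\<And>r \<eta>'. 0 < r \<Longrightarrow> r \<le> r0 \<Longrightarrow> 0 < \<eta>' \<Longrightarrow> eventually (\<lambda>n. \<forall>t\<in>{a..b}.
      \<bar>(walk_prob (w n) (nat \<lfloor>\<gamma> n * t\<rfloor>) \<rho> (ball x r) + walk_prob (w n) (Suc (nat \<lfloor>\<gamma> n * t\<rfloor>)) \<rho> (ball x r)) / 2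
        - q t x * measure \<nu> (ball x r \<inter> F)\<bar> \<le> \<eta>' + \<eta> * measure \<nu> (ball x r \<inter> F)) sequentially"
proof -
  obtain \<delta> where "0 < \<delta>" and L_close: "\<And>r s t. 0 < r \<Longrightarrow> r \<le> \<delta> \<Longrightarrow> emeasure \<nu> (ball x r \<inter> F) < \<infinity> \<Longrightarrow>
      s \<in> {a..b + 1} \<Longrightarrow> t \<in> {a..b + 1} \<Longrightarrow> \<bar>s - t\<bar> < \<delta> \<Longrightarrow>
      \<bar>(LINT y : ball x r \<inter> F | \<nu>. q s y) - q t x * measure \<nu> (ball x r \<inter> F)\<bar>
        \<le> \<eta> * measure \<nu> (ball x r \<inter> F)"
    using ball_integral_close_to_density[OF x \<open>0 < a\<close> \<open>0 < \<eta>\<close>] by blast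
  obtain rf where "0 < rf" and finite: "\<And>r. r \<le> rf \<Longrightarrow> emeasure \<nu> (ball x r \<inter> F) < \<infinity>"
    using emeasure_small_ball_finite[OF x] by blast
  have "eventually (\<lambda>n. \<forall>t\<in>{a..b}.
      \<bar>(walk_prob (w n) (nat \<lfloor>\<gamma> n * t\<rfloor>) \<rho> (ball x r) + walk_prob (w n) (Suc (nat \<lfloor>\<gamma> n * t\<rfloor>)) \<rho> (ball x r)) / 2
        - q t x * measure \<nu> (ball x r \<inter> F)\<bar> \<le> \<eta>' + \<eta> * measure \<nu> (ball x r \<inter> F)) sequentially"
    if "0 < r" "r \<le> min \<delta> rf" "0 < \<eta>'" for r \<eta>'
  proof -
    define L where "L s = (LINT y : ball x r \<inter> F | \<nu>. q s y)" for s
    define v where "v = measure \<nu> (ball x r \<inter> F)"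
    have "uniform_limit {a..b + 1} (\<lambda>n s. walk_prob (w n) (nat \<lfloor>\<gamma> n * s\<rfloor>) \<rho> (ball x r)) L sequentially"
      using A1d[OF \<open>0 < a\<close> _ x \<open>0 < r\<close>, of "b + 1"] \<open>a \<le> b\<close> by (simp add: L_def[abs_def])
    from uniform_limitD[OF this \<open>0 < \<eta>'\<close>]
    have "eventually (\<lambda>n. \<forall>s\<in>{a..b + 1}. \<bar>walk_prob (w n) (nat \<lfloor>\<gamma> n * s\<rfloor>) \<rho> (ball x r) - L s\<bar> < \<eta>')
        sequentially"
      by (simp add: dist_real_def)
    moreover have "eventually (\<lambda>n. 1 / \<delta> + 1 \<le> \<gamma> n) sequentially"
      using gamma_div by (simp add: filterlim_at_top)
    ultimately show ?thesis unfolding v_def[symmetric]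
    proof eventually_elim
      case (elim n)
      have "0 < 1 / \<delta>" using \<open>0 < \<delta>\<close> by simp
      then have "1 \<le> \<gamma> n" "1 / \<delta> < \<gamma> n" using elim(2) by linarith+
      then have "0 < 1 / \<gamma> n" "1 / \<gamma> n \<le> 1" "1 / \<gamma> n < \<delta>"
        using \<open>0 < \<delta>\<close> by (simp_all add: divide_less_eq mult.commute)
      have close: "\<bar>L s - q t x * v\<bar> \<le> \<eta> * v" if "s \<in> {a..b + 1}" "t \<in> {a..b + 1}" "\<bar>s - t\<bar> < \<delta>" for s t
        using L_close[OF \<open>0 < r\<close> _ finite that] \<open>r \<le> min \<delta> rf\<close> by (simp add: L_def v_def)
      show ?case
      proof
        fix t assume t: "t \<in> {a..b}"
        \<comment> \<open>the second time index of the smoothed kernel is the first one at time t + 1 / \<gamma> n\<close>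
        have shift: "Suc (nat \<lfloor>\<gamma> n * t\<rfloor>) = nat \<lfloor>\<gamma> n * (t + 1 / \<gamma> n)\<rfloor>"
          using Suc_nat_floor_shift[of "\<gamma> n" t] \<open>1 \<le> \<gamma> n\<close> t \<open>0 < a\<close> by simp
        have "t \<in> {a..b + 1}" "t + 1 / \<gamma> n \<in> {a..b + 1}" "\<bar>t + 1 / \<gamma> n - t\<bar> < \<delta>"
          using t \<open>0 < 1 / \<gamma> n\<close> \<open>1 / \<gamma> n \<le> 1\<close> \<open>1 / \<gamma> n < \<delta>\<close> unfolding atLeastAtMost_iff by linarith+
        then have "\<bar>walk_prob (w n) (Suc (nat \<lfloor>\<gamma> n * t\<rfloor>)) \<rho> (ball x r) - L (t + 1 / \<gamma> n)\<bar> < \<eta>'"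
          "\<bar>L (t + 1 / \<gamma> n) - q t x * v\<bar> \<le> \<eta> * v"
          "\<bar>walk_prob (w n) (nat \<lfloor>\<gamma> n * t\<rfloor>) \<rho> (ball x r) - L t\<bar> < \<eta>'"
          "\<bar>L t - q t x * v\<bar> \<le> \<eta> * v"
          using elim(1) close \<open>0 < \<delta>\<close> unfolding shift by auto
        then show "\<bar>(walk_prob (w n) (nat \<lfloor>\<gamma> n * t\<rfloor>) \<rho> (ball x r)
            + walk_prob (w n) (Suc (nat \<lfloor>\<gamma> n * t\<rfloor>)) \<rho> (ball x r)) / 2 - q t x * v\<bar> \<le> \<eta>' + \<eta> * v"
          by (simp add: abs_le_iff abs_less_iff field_simps)
      qed
    qed
  qed
  moreover have "0 < min \<delta> rf" using \<open>0 < \<delta>\<close> \<open>0 < rf\<close> by simp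
  moreover have "emeasure \<nu> (ball x r \<inter> F) < \<infinity>" if "r \<le> min \<delta> rf" for r
    using finite that by simp
  ultimately show ?thesis using that by blast
qed

lemma eventually_rescaled_gmeasure_close:
  assumes x: "x \<in> F" and "0 < r" and finite: "emeasure \<nu> (ball x r \<inter> F) < \<infinity>" and "0 < \<eta>'"
  shows "eventually (\<lambda>n. gmeasure (w n) (ball x r) < \<infinity> \<and>
    \<bar>enn2real (gmeasure (w n) (ball x r)) / \<beta> n - measure \<nu> (ball x r \<inter> F)\<bar> \<le> \<eta>') sequentially"
proof -
  have "emeasure \<nu> (ball x r) = ennreal (measure \<nu> (ball x r \<inter> F))"
    using nu_ext[of "ball x r"] emeasure_eq_ennreal_measure[of \<nu> "ball x r \<inter> F"] finite by simp
  then have lim: "(\<lambda>n. ennreal (1 / \<beta> n) * gmeasure (w n) (ball x r))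
      \<longlonglongrightarrow> ennreal (measure \<nu> (ball x r \<inter> F))"
    using A1c[OF x \<open>0 < r\<close>] by simp
  have "eventually (\<lambda>n. ennreal (1 / \<beta> n) * gmeasure (w n) (ball x r) < \<infinity>) sequentially"
    using order_tendstoD(2)[OF lim] by simp
  moreover have "eventually (\<lambda>n. \<bar>enn2real (ennreal (1 / \<beta> n) * gmeasure (w n) (ball x r))
      - measure \<nu> (ball x r \<inter> F)\<bar> < \<eta>') sequentially"
    using tendstoD[OF tendsto_enn2real[OF lim] \<open>0 < \<eta>'\<close>] by (simp add: dist_real_def)
  moreover have "eventually (\<lambda>n. 0 < \<beta> n) sequentially"
    using beta_div by (simp add: filterlim_at_top_dense)
  ultimately show ?thesis
  proof eventually_elim
    case (elim n)
    then have "gmeasure (w n) (ball x r) < \<infinity>"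
      using ennreal_mult_less_top[of "ennreal (1 / \<beta> n)"] by (auto simp: top.not_eq_extremum)
    moreover have "enn2real (ennreal (1 / \<beta> n) * gmeasure (w n) (ball x r))
        = enn2real (gmeasure (w n) (ball x r)) / \<beta> n"
      using elim(3) by (simp add: enn2real_mult)
    ultimately show ?case using elim(2) by simp
  qed
qed

lemma eventually_rescaled_kernel_close:
  assumes x: "x \<in> F" and "0 < a" "a \<le> b" "0 < \<epsilon>"
  shows "eventually (\<lambda>n. \<forall>t\<in>{a..b}. \<bar>\<beta> n * qG (w n) (nat \<lfloor>\<gamma> n * t\<rfloor>) \<rho> (g n x) - q t x\<bar> \<le> \<epsilon>)
    sequentially"
proof -
  define \<eta> where "\<eta> = \<epsilon> / 7"
  have "0 < \<eta>" using \<open>0 < \<epsilon>\<close> by (simp add: \<eta>_def)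
  obtain r1 where "0 < r1" and near: "\<And>r. 0 < r \<Longrightarrow> r \<le> r1 \<Longrightarrow> eventually (\<lambda>n. \<forall>t\<in>{a..b}.
      \<forall>y\<in>ball x r \<inter> V n. \<bar>\<beta> n * qG (w n) (nat \<lfloor>\<gamma> n * t\<rfloor>) \<rho> y
        - \<beta> n * qG (w n) (nat \<lfloor>\<gamma> n * t\<rfloor>) \<rho> (g n x)\<bar> < \<eta>) sequentially"
    using eventually_rescaled_qG_near_nearest_vertex[OF x \<open>0 < a\<close> \<open>a \<le> b\<close> \<open>0 < \<eta>\<close>] by blast
  obtain r2 where "0 < r2" and finite: "\<And>r. r \<le> r2 \<Longrightarrow> emeasure \<nu> (ball x r \<inter> F) < \<infinity>"
    and walk: "\<And>r \<eta>'. 0 < r \<Longrightarrow> r \<le> r2 \<Longrightarrow> 0 < \<eta>' \<Longrightarrow> eventually (\<lambda>n.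
      \<forall>t\<in>{a..b}. \<bar>(walk_prob (w n) (nat \<lfloor>\<gamma> n * t\<rfloor>) \<rho> (ball x r)
        + walk_prob (w n) (Suc (nat \<lfloor>\<gamma> n * t\<rfloor>)) \<rho> (ball x r)) / 2 - q t x * measure \<nu> (ball x r \<inter> F)\<bar>
        \<le> \<eta>' + \<eta> * measure \<nu> (ball x r \<inter> F)) sequentially"
    using eventually_smoothed_walk_close[OF x \<open>0 < a\<close> \<open>a \<le> b\<close> \<open>0 < \<eta>\<close>] by blast
  define r where "r = min r1 r2"
  have r: "0 < r" "r \<le> r1" "r \<le> r2" "emeasure \<nu> (ball x r \<inter> F) < \<infinity>"
    using \<open>0 < r1\<close> \<open>0 < r2\<close> finite by (auto simp: r_def)
  define v where "v = measure \<nu> (ball x r \<inter> F)"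
  have "0 < v"
    using nu_full[OF x \<open>0 < r\<close>] r(4) by (simp add: v_def measure_def enn2real_positive_iff)
  obtain M where "0 \<le> M" and M: "\<And>t. t \<in> {a..b} \<Longrightarrow> \<bar>q t x\<bar> \<le> M"
    using q_bounded_on_Icc[OF x \<open>0 < a\<close>] by blast
  define \<eta>' where "\<eta>' = min (v / 2) (\<eta> * v / (1 + M))"
  have "0 < \<eta>'" using \<open>0 < v\<close> \<open>0 < \<eta>\<close> \<open>0 \<le> M\<close> by (simp add: \<eta>'_def)
  have "\<eta>' \<le> v / 2" unfolding \<eta>'_def by (rule min.cobounded1)
  have "\<eta>' * (1 + M) \<le> \<eta> * v"
    using \<open>0 \<le> M\<close> mult_right_mono[of \<eta>' "\<eta> * v / (1 + M)" "1 + M"] by (simp add: \<eta>'_def)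
  have "eventually (\<lambda>n. 0 < \<beta> n) sequentially"
    using beta_div by (simp add: filterlim_at_top_dense)
  with near[OF r(1,2)] walk[OF r(1,3) \<open>0 < \<eta>'\<close>]
    eventually_rescaled_gmeasure_close[OF x r(1,4) \<open>0 < \<eta>'\<close>] eventually_ge_at_top[of 1]
  show ?thesis
  proof eventually_elim
    case (elim n)
    have "n \<ge> 1" "0 < \<beta> n" and gmeasure: "gmeasure (w n) (ball x r) < \<infinity>"
      "\<bar>enn2real (gmeasure (w n) (ball x r)) / \<beta> n - v\<bar> \<le> \<eta>'"
      using elim by (simp_all add: v_def)
    show ?case
    proof
      fix t assume "t \<in> {a..b}"
      define m where "m = nat \<lfloor>\<gamma> n * t\<rfloor>"
      have "\<eta>' * (1 + \<bar>q t x\<bar>) \<le> \<eta>' * (1 + M)"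
        using M[OF \<open>t \<in> {a..b}\<close>] \<open>0 < \<eta>'\<close> by (intro mult_left_mono) auto
      then have error_budget: "\<eta>' * (1 + \<bar>q t x\<bar>) \<le> \<eta> * v" using \<open>\<eta>' * (1 + M) \<le> \<eta> * v\<close> by linarith
      have near_vertex: "\<bar>\<beta> n * qG (w n) m \<rho> y - \<beta> n * qG (w n) m \<rho> (g n x)\<bar> \<le> \<eta>"
        if "y \<in> ball x r \<inter> V n" for y
        using elim(1) \<open>t \<in> {a..b}\<close> that by (force simp: m_def)
      have walk_close: "\<bar>(walk_prob (w n) m \<rho> (ball x r) + walk_prob (w n) (Suc m) \<rho> (ball x r)) / 2 - q t x * v\<bar>
          \<le> \<eta>' + \<eta> * v"
        using elim(2) \<open>t \<in> {a..b}\<close> by (simp add: m_def v_def del: walk_prob.simps)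
      have "\<bar>\<beta> n * qG (w n) m \<rho> (g n x) - q t x\<bar> \<le> 7 * \<eta>"
        using \<open>0 < \<eta>\<close>
        by (intro rescaled_kernel_estimate[OF graphs[OF \<open>n \<ge> 1\<close>] V_root[OF \<open>n \<ge> 1\<close>] \<open>0 < \<beta> n\<close>
            gmeasure(1) _ near_vertex walk_close gmeasure(2) \<open>\<eta>' \<le> v / 2\<close> error_budget \<open>0 < v\<close>]) auto
      then show "\<bar>\<beta> n * qG (w n) (nat \<lfloor>\<gamma> n * t\<rfloor>) \<rho> (g n x) - q t x\<bar> \<le> \<epsilon>"
        by (simp add: \<eta>_def m_def)
    qed
  qed
qed

end

theorem proposition2p2:
  fixes F :: "'a::metric_space set"
    and \<rho> :: 'a
    and \<nu> :: "'a measure"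
    and q :: "real \<Rightarrow> 'a \<Rightarrow> real"
    and V :: "nat \<Rightarrow> 'a set"
    and w :: "nat \<Rightarrow> 'a \<Rightarrow> 'a \<Rightarrow> real"
    and \<alpha> \<beta> \<gamma> :: "nat \<Rightarrow> real"
    and g :: "nat \<Rightarrow> 'a \<Rightarrow> 'a"
    and a b :: real
  assumes F_bcompact: "\<And>x r. r > 0 \<Longrightarrow> compact (F \<inter> cball x r)"
    and rho_F: "\<rho> \<in> F"
    and nu_sets: "sets \<nu> = sets borel"
    and nu_ext: "\<And>A. A \<in> sets borel \<Longrightarrow> emeasure \<nu> A = emeasure \<nu> (A \<inter> F)"
    and nu_locfin: "\<And>x. x \<in> F \<Longrightarrow> \<exists>r>0. emeasure \<nu> (ball x r \<inter> F) < \<infinity>"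
    and nu_inner_reg: "\<And>A. A \<in> sets borel \<Longrightarrow>
          emeasure \<nu> (A \<inter> F) = (SUP K \<in> {K. K \<subseteq> A \<inter> F \<and> compact K}. emeasure \<nu> K)"
    and nu_full: "\<And>x r. x \<in> F \<Longrightarrow> r > 0 \<Longrightarrow> emeasure \<nu> (ball x r \<inter> F) > 0"
    and q_cont: "continuous_on ({0<..} \<times> F) (\<lambda>(t, x). q t x)"
    and q_nonneg: "\<And>t x. t > 0 \<Longrightarrow> x \<in> F \<Longrightarrow> q t x \<ge> 0"
    and q_int: "\<And>t. t > 0 \<Longrightarrow> (\<integral>\<^sup>+ x \<in> F. ennreal (q t x) \<partial>\<nu>) = 1"
    and graphs: "\<And>n. n \<ge> 1 \<Longrightarrow> wgraph (V n) (w n)"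
    and V_root: "\<And>n. n \<ge> 1 \<Longrightarrow> \<rho> \<in> V n"
    and alpha_nonneg: "\<And>n. \<alpha> n \<ge> 0" and alpha_div: "filterlim \<alpha> at_top sequentially"
    and beta_nonneg: "\<And>n. \<beta> n \<ge> 0" and beta_div: "filterlim \<beta> at_top sequentially"
    and gamma_nonneg: "\<And>n. \<gamma> n \<ge> 0" and gamma_div: "filterlim \<gamma> at_top sequentially"
    and g_min: "\<And>n x. n \<ge> 1 \<Longrightarrow> g n x \<in> V n \<and> (\<forall>v \<in> V n. dist x (g n x) \<le> dist x v)"
    and I: "0 < a" "a \<le> b"
    \<comment> \<open>(A1)(a)\<close>
    and A1a_lower: "\<exists>c1>0. \<forall>n\<ge>1. \<forall>x\<in>V n. \<forall>y\<in>V n.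
          real (gdist (w n) x y) \<ge> c1 * \<alpha> n * dist x y"
    and A1a_upper: "\<exists>\<alpha>'. (\<forall>n. \<alpha>' n \<ge> 0) \<and> \<alpha>' \<in> o(\<alpha>) \<and>
          (\<forall>r>0. \<exists>c2 n0. \<forall>n\<ge>n0. \<forall>x \<in> V n \<inter> ball \<rho> r. \<forall>y \<in> V n \<inter> ball \<rho> r.
             real (gdist (w n) x y) \<le> c2 * \<alpha> n * dist x y + \<alpha>' n)"
    \<comment> \<open>(A1)(b)\<close>
    and A1b: "\<And>r. r > 0 \<Longrightarrow>
          (\<lambda>n. SUP x \<in> ball \<rho> r \<inter> F. infdist x (V n)) \<longlonglongrightarrow> 0"
    \<comment> \<open>(A1)(c)\<close>
    and A1c: "\<And>x r. x \<in> F \<Longrightarrow> r > 0 \<Longrightarrow>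
          (\<lambda>n. ennreal (1 / \<beta> n) * gmeasure (w n) (ball x r)) \<longlonglongrightarrow> emeasure \<nu> (ball x r)"
    \<comment> \<open>(A1)(d)\<close>
    and A1d: "\<And>a' b' x r. 0 < a' \<Longrightarrow> a' \<le> b' \<Longrightarrow> x \<in> F \<Longrightarrow> r > 0 \<Longrightarrow>
          uniform_limit {a'..b'}
            (\<lambda>n t. walk_prob (w n) (nat \<lfloor>\<gamma> n * t\<rfloor>) \<rho> (ball x r))
            (\<lambda>t. (LINT y : ball x r \<inter> F | \<nu>. q t y)) sequentially"
    \<comment> \<open>(A2)\<close>
    and A2: "\<And>a' b' r. 0 < a' \<Longrightarrow> a' \<le> b' \<Longrightarrow> r > 0 \<Longrightarrow>
          ((\<lambda>\<delta>. limsup (\<lambda>n.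
              SUP (x, y, t) \<in> {(x, y, t). x \<in> gball (V n) (w n) \<rho> (\<alpha> n * r) \<and>
                                        y \<in> gball (V n) (w n) \<rho> (\<alpha> n * r) \<and>
                                        real (gdist (w n) x y) \<le> \<alpha> n * \<delta> \<and>
                                        t \<in> {a'..b'}}.
                ereal (\<beta> n * \<bar>qG (w n) (nat \<lfloor>\<gamma> n * t\<rfloor>) \<rho> x
                               - qG (w n) (nat \<lfloor>\<gamma> n * t\<rfloor>) \<rho> y\<bar>)))
           \<longlongrightarrow> 0) (at_right 0)"
  shows "\<forall>x \<in> F. (\<lambda>n. SUP t \<in> {a..b}.
           \<bar>\<beta> n * qG (w n) (nat \<lfloor>\<gamma> n * t\<rfloor>) \<rho> (g n x) - q t x\<bar>) \<longlonglongrightarrow> 0"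
proof
  fix x assume "x \<in> F"
  interpret rescaled_walk_limit F \<rho> \<nu> q V w \<alpha> \<beta> \<gamma> g
    by unfold_locales (fact assms)+
  show "(\<lambda>n. SUP t \<in> {a..b}. \<bar>\<beta> n * qG (w n) (nat \<lfloor>\<gamma> n * t\<rfloor>) \<rho> (g n x) - q t x\<bar>) \<longlonglongrightarrow> 0"
    using eventually_rescaled_kernel_close[OF \<open>x \<in> F\<close> I] I by (intro SUP_abs_tendsto_0I) auto
qed

end
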